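(* Let $\Phi$ be a collection of repulsive potentials on $\mathbb{X}$, let $U\subset\mathbb{C}$ be bounded, and let $\Lambda\subset\mathbb{X}$ be bounded and measurable. Then the family of functions $\{U\to\mathbb{C},\ \lambda\mapsto Z_{\Lambda,\phi}(\lambda)\ :\ \phi\in\Phi\}$ is uniformly equicontinuous. Moreover, if $\Phi$ is closed under modification and is $\delta$-zero-free on $\Lambda$ at some activity $\lambda_0\in\mathbb{C}$ for some $\delta>0$, then there is a complex neighborhood $W$ of $\lambda_0$ such that the family $\{W\to\mathbb{C},\ \lambda\mapsto\kappa_{\Lambda,\phi,\lambda}(x)\ :\ \phi\in\Phi,\ x\in\Lambda\}$ is well defined and uniformly equicontinuous.
   Context: $(\mathbb{X},d)$ is a complete separable metric space with a locally finite Borel measure $\nu$. A potential $\phi=(\phi_k)_{k\in\mathbb{N}}$ is a family of measurable $\phi_k:\mathbb{X}^k\to\mathbb{R}\cup\{\infty\}$, written $\phi(\mathbf{x})=\phi_k(\mathbf{x})$ for $\mathbf{x}\in\mathbb{X}^k$; repulsive means $\phi_k\ge0$ for all $k$; potentials are assumed symmetric (invariant under permutations of coordinates). For $\mathbf{x}\in\mathbb{X}^k$, $S\subseteq[k]$, $\mathbf{x}_S=(x_i)_{i\in S}$; $H(\mathbf{x})=\sum_{\emptyset\ne S\subseteq[k]}\phi(\mathbf{x}_S)$; $Z_{\Lambda,\phi}(\lambda)=\sum_{k\ge0}\frac{\lambda^k}{k!}\int_{\Lambda^k}e^{-H(\mathbf{x})}\nu^k(d\mathbf{x})$. Pinning: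 for $\mathbf{x}\in\mathbb{X}^k$, $\phi(\cdot\mid\mathbf{x})$ is the potential $\phi(\mathbf{y}\mid\mathbf{x})=\sum_{S\subseteq[k]}\phi(\mathbf{y},\mathbf{x}_S)$ for $\mathbf{y}\in\mathbb{X}^m$ (concatenated tuples; $S=\emptyset$ gives $\phi(\mathbf{y})$); $Z_{\Lambda,\phi}(\lambda\mid\mathbf{x})$ is the partition function of $\phi(\cdot\mid\mathbf{x})$. Modified $k$-point density: if $Z_{\Lambda,\phi}(\lambda)\ne0$, $\kappa_{\Lambda,\phi,\lambda}(\mathbf{x})=\lambda^k Z_{\Lambda,\phi}(\lambda\mid\mathbf{x})/Z_{\Lambda,\phi}(\lambda)$. Fix $z\in\mathbb{X}$ and set $D(\mathbf{x})=\sum_j d(z,x_j)$. For $y\in\mathbb{X}$, $t\in[0,\infty]$: $\phi(\mathbf{x}\mid y_{\prec t})=\phi(\mathbf{x}\mid y)$ if $D(\mathbf{x})<t$ and $=\phi(\mathbf{x})$ otherwise. $\Phi$ is $\delta$-zero-free on $\Lambda$ at $\lambda$ if $|Z_{\Lambda,\phi}(\lambda)|\ge\delta$ for all $\phi\in\Phi$. $\Phi$ is closed under modification if (1) for all $\phi\in\Phi$, $y\in\mathbb{X}$, $t\in[0,\infty]$, $\phi(\cdot\mid y_{\prec t})\in\Phi$, and (2) for all $\phi\in\Phi$ and measurable $\Delta\subseteq\mathbb{X}$, the potential $\psi$ with $\psi_k=\phi_k$ for $k\ge2$ and $\psi_1=\infty$ on $\Delta$, $\psi_1=\phi_1$ off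 $\Delta$, lies in $\Phi$. *)

theory Defs
  imports "HOL-Analysis.Analysis"
begin

text \<open>Tuples in X^k are represented as lists of length k; a potential
  phi = (phi_k)_k is a single function on lists, phi_k being its restriction
  to lists of length k (k >= 1). Its value at the empty list plays no role.\<close>

type_synonym 'a potential = "'a list \<Rightarrow> ereal"

definition locally_finite_borel :: "('a::metric_space) measure \<Rightarrow> bool" where
  "locally_finite_borel \<nu> \<longleftrightarrow> sets \<nu> = sets borel \<and>
     (\<forall>B \<in> sets borel. bounded B \<longrightarrow> emeasure \<nu> B < \<infinity>)"

definition is_potential :: "('a::metric_space) potential \<Rightarrow> bool" where
  "is_potential \<phi> \<longleftrightarrow>
     (\<forall>k\<ge>1. (\<lambda>x. \<phi> (map x [0..<k])) \<in> borel_measurable (PiM {..<k} (\<lambda>_. borel))) \<and>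
     (\<forall>xs. xs \<noteq> [] \<longrightarrow> \<phi> xs \<noteq> -\<infinity>) \<and>
     (\<forall>xs ys. xs \<noteq> [] \<longrightarrow> mset xs = mset ys \<longrightarrow> \<phi> xs = \<phi> ys)"

definition repulsive :: "'a potential \<Rightarrow> bool" where
  "repulsive \<phi> \<longleftrightarrow> (\<forall>xs. xs \<noteq> [] \<longrightarrow> \<phi> xs \<ge> 0)"

definition hamiltonian :: "'a potential \<Rightarrow> 'a list \<Rightarrow> ereal" where
  "hamiltonian \<phi> xs = (\<Sum>S \<in> Pow {..<length xs} - {{}}. \<phi> (nths xs S))"

definition exp_neg :: "ereal \<Rightarrow> real" where
  "exp_neg h = (case h of ereal r \<Rightarrow> exp (- r) | PInfty \<Rightarrow> 0 | MInfty \<Rightarrow> 0)"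

definition partition_fn ::
  "('a::metric_space) measure \<Rightarrow> 'a set \<Rightarrow> 'a potential \<Rightarrow> complex \<Rightarrow> complex" where
  "partition_fn \<nu> \<Lambda> \<phi> w =
     (\<Sum>k. w ^ k / of_nat (fact k) *
        complex_of_real (LINT x : (PiE {..<k} (\<lambda>_. \<Lambda>)) | PiM {..<k} (\<lambda>_. \<nu>).
                          exp_neg (hamiltonian \<phi> (map x [0..<k]))))"

definition pin :: "'a potential \<Rightarrow> 'a list \<Rightarrow> 'a potential" where
  "pin \<phi> xs ys = (if ys = [] then \<phi> [] else
     (\<Sum>S \<in> Pow {..<length xs}. \<phi> (ys @ nths xs S)))"

text \<open>Modified k-point density (meaningful when Z \<noteq> 0).\<close>
definition kappa ::
  "('a::metric_space) measure \<Rightarrow> 'a set \<Rightarrow> 'a potential \<Rightarrow> complex \<Rightarrow> 'a list \<Rightarrow> complex" where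
  "kappa \<nu> \<Lambda> \<phi> w xs = w ^ length xs * partition_fn \<nu> \<Lambda> (pin \<phi> xs) w / partition_fn \<nu> \<Lambda> \<phi> w"

definition Dsum :: "('a::metric_space) \<Rightarrow> 'a list \<Rightarrow> real" where
  "Dsum z xs = (\<Sum>x \<leftarrow> xs. dist z x)"

definition seq_pin :: "('a::metric_space) \<Rightarrow> 'a potential \<Rightarrow> 'a \<Rightarrow> ereal \<Rightarrow> 'a potential" where
  "seq_pin z \<phi> y t xs = (if ereal (Dsum z xs) < t then pin \<phi> [y] xs else \<phi> xs)"

definition hard_core_mod :: "'a potential \<Rightarrow> 'a set \<Rightarrow> 'a potential" where
  "hard_core_mod \<phi> \<Delta> xs = (if length xs = 1 \<and> hd xs \<in> \<Delta> then \<infinity> else \<phi> xs)"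

definition closed_under_modification :: "('a::metric_space) \<Rightarrow> 'a potential set \<Rightarrow> bool" where
  "closed_under_modification z \<Phi> \<longleftrightarrow>
     (\<forall>\<phi>\<in>\<Phi>. \<forall>y. \<forall>t. t \<ge> 0 \<longrightarrow> seq_pin z \<phi> y t \<in> \<Phi>) \<and>
     (\<forall>\<phi>\<in>\<Phi>. \<forall>\<Delta> \<in> sets borel. hard_core_mod \<phi> \<Delta> \<in> \<Phi>)"

definition zero_free ::
  "('a::metric_space) measure \<Rightarrow> 'a potential set \<Rightarrow> 'a set \<Rightarrow> complex \<Rightarrow> real \<Rightarrow> bool" where
  "zero_free \<nu> \<Phi> \<Lambda> w \<delta> \<longleftrightarrow> (\<forall>\<phi>\<in>\<Phi>. norm (partition_fn \<nu> \<Lambda> \<phi> w) \<ge> \<delta>)"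

definition unif_equicontinuous_on ::
  "('b::metric_space) set \<Rightarrow> ('b \<Rightarrow> 'c::metric_space) set \<Rightarrow> bool" where
  "unif_equicontinuous_on U F \<longleftrightarrow>
     (\<forall>e>0. \<exists>d>0. \<forall>f\<in>F. \<forall>a\<in>U. \<forall>b\<in>U. dist a b < d \<longrightarrow> dist (f a) (f b) < e)"

end

theory Submission
  imports Defs
begin

text \<open>
  For a repulsive potential 0 \<le> e^(-H) \<le> 1, so the partition function is a power series
  Z(\<lambda>) = \<Sum>_k c_k \<lambda>^k / k! with |c_k| \<le> m^k, m = \<nu>(\<Lambda>), whatever the potential.
  Such a series is bounded by e^(m R) and (m e^(m R))-Lipschitz on the disc of radius R, which
  gives the first claim. The same Lipschitz bound keeps |Z| \<ge> \<delta>/2 on a small disc around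
  \<lambda>0, and there \<kappa>(x) = \<lambda> Z(\<lambda> | x) / Z(\<lambda>) is a product of bounded Lipschitz functions
  and the inverse of a Lipschitz function bounded away from 0. The pinned potential is again
  repulsive, so all bounds, hence all Lipschitz constants, are uniform in \<phi> and x.
\<close>

lemma norm_power_diff_le:
  fixes a b :: "'a::real_normed_div_algebra"
  assumes "norm a \<le> R" "norm b \<le> R"
  shows "norm (a ^ k - b ^ k) \<le> k * R ^ (k - 1) * norm (a - b)"
proof (induction k)
  case (Suc k)
  have "a ^ Suc k - b ^ Suc k = a * (a ^ k - b ^ k) + (a - b) * b ^ k"
    by (simp add: algebra_simps)
  then have "norm (a ^ Suc k - b ^ Suc k) \<le> norm a * norm (a ^ k - b ^ k) + norm (a - b) * norm b ^ k"
    by (metis norm_mult norm_power norm_triangle_ineq)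
  also have "\<dots> \<le> R * (k * R ^ (k - 1) * norm (a - b)) + norm (a - b) * R ^ k"
    using assms order_trans[OF norm_ge_zero assms(1)]
    by (intro add_mono mult_mono Suc.IH power_mono mult_left_mono) auto
  also have "\<dots> = Suc k * R ^ k * norm (a - b)"
    by (cases k) (simp_all add: algebra_simps)
  finally show ?case by simp
qed simp

lemma lipschitz_on_mult:
  fixes f g :: "'a::metric_space \<Rightarrow> 'b::real_normed_algebra"
  assumes f: "K-lipschitz_on S f" and g: "L-lipschitz_on S g"
    and fA: "\<And>x. x \<in> S \<Longrightarrow> norm (f x) \<le> A" and gB: "\<And>x. x \<in> S \<Longrightarrow> norm (g x) \<le> B"
    and "0 \<le> A" "0 \<le> B"
  shows "(A * L + B * K)-lipschitz_on S (\<lambda>x. f x * g x)"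
proof (rule lipschitz_onI)
  have "0 \<le> K" "0 \<le> L" using f g by (auto intro: lipschitz_on_nonneg)
  then show "0 \<le> A * L + B * K" using \<open>0 \<le> A\<close> \<open>0 \<le> B\<close> by simp
  fix x y assume xy: "x \<in> S" "y \<in> S"
  have "dist (f x * g x) (f y * g y) = norm (f x * (g x - g y) + (f x - f y) * g y)"
    by (simp add: dist_norm algebra_simps)
  also have "\<dots> \<le> norm (f x) * dist (g x) (g y) + dist (f x) (f y) * norm (g y)"
    unfolding dist_norm by (intro norm_triangle_le add_mono norm_mult_ineq)
  also have "\<dots> \<le> A * (L * dist x y) + (K * dist x y) * B"
    using xy \<open>0 \<le> A\<close> \<open>0 \<le> K\<close>
    by (intro add_mono mult_mono fA gB lipschitz_onD[OF f] lipschitz_onD[OF g]) auto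
  finally show "dist (f x * g x) (f y * g y) \<le> (A * L + B * K) * dist x y"
    by (simp add: algebra_simps)
qed

lemma lipschitz_on_inverse:
  fixes g :: "'a::metric_space \<Rightarrow> 'b::real_normed_div_algebra"
  assumes g: "L-lipschitz_on S g" and "0 < \<eta>" and g_ge: "\<And>x. x \<in> S \<Longrightarrow> \<eta> \<le> norm (g x)"
  shows "(L / \<eta>\<^sup>2)-lipschitz_on S (\<lambda>x. inverse (g x))"
proof (rule lipschitz_onI)
  show "0 \<le> L / \<eta>\<^sup>2" using lipschitz_on_nonneg[OF g] by simp
  fix x y assume xy: "x \<in> S" "y \<in> S"
  then have "g x \<noteq> 0" "g y \<noteq> 0" using g_ge \<open>0 < \<eta>\<close> by (metis norm_zero not_le)+
  then have "dist (inverse (g x)) (inverse (g y)) = dist (g x) (g y) / (norm (g x) * norm (g y))"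
    by (simp add: dist_norm inverse_diff_inverse norm_mult norm_inverse divide_inverse ac_simps)
  also have "\<dots> \<le> (L * dist x y) / \<eta>\<^sup>2"
    using xy g_ge \<open>0 < \<eta>\<close> lipschitz_on_nonneg[OF g]
    by (intro frac_le lipschitz_onD[OF g]) (auto simp: power2_eq_square intro: mult_mono)
  finally show "dist (inverse (g x)) (inverse (g y)) \<le> L / \<eta>\<^sup>2 * dist x y" by simp
qed

lemma lipschitz_on_power:
  fixes R :: real
  assumes "0 \<le> R"
  shows "(n * R ^ (n - 1))-lipschitz_on (cball (0 :: 'a::real_normed_field) R) (\<lambda>w. w ^ n)"
proof (rule lipschitz_onI)
  fix a b :: 'a assume "a \<in> cball 0 R" "b \<in> cball 0 R"
  then show "dist (a ^ n) (b ^ n) \<le> n * R ^ (n - 1) * dist a b"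
    unfolding dist_norm by (intro norm_power_diff_le) auto
qed (use assms in simp)

lemma unif_equicontinuous_on_lipschitz:
  assumes "\<And>f. f \<in> F \<Longrightarrow> L-lipschitz_on U f"
  shows "unif_equicontinuous_on U F"
  unfolding unif_equicontinuous_on_def
proof (intro allI impI)
  fix e :: real assume "0 < e"
  show "\<exists>d>0. \<forall>f\<in>F. \<forall>a\<in>U. \<forall>b\<in>U. dist a b < d \<longrightarrow> dist (f a) (f b) < e"
  proof (intro exI[of _ "e / (\<bar>L\<bar> + 1)"] conjI ballI impI)
    show "0 < e / (\<bar>L\<bar> + 1)" using \<open>0 < e\<close> by simp
    fix f a b assume f: "f \<in> F" and ab: "a \<in> U" "b \<in> U" and "dist a b < e / (\<bar>L\<bar> + 1)"
    then have "L * dist a b \<le> \<bar>L\<bar> * (e / (\<bar>L\<bar> + 1))"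
      by (intro mult_mono) auto
    also have "\<dots> < e" using \<open>0 < e\<close> by (simp add: field_simps)
    finally show "dist (f a) (f b) < e"
      using lipschitz_onD[OF assms[OF f] ab] by linarith
  qed
qed

lemma exp_converges_real: "(\<lambda>k. x ^ k / fact k) sums exp (x::real)"
  using exp_converges[of x] by (simp add: divide_inverse_commute)

lemma exp_converges_deriv_real:
  fixes m R :: real
  shows "(\<lambda>k. k * R ^ (k - 1) * m ^ k / fact k) sums (m * exp (m * R))"
proof -
  let ?f = "\<lambda>k. k * R ^ (k - 1) * m ^ k / fact k"
  have "(\<lambda>k. ?f (Suc k)) = (\<lambda>k. m * ((m * R) ^ k / fact k))"
    by (simp add: fun_eq_iff power_mult_distrib field_simps del: of_nat_Suc)
  then have "(\<lambda>k. ?f (Suc k)) sums (m * exp (m * R))"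
    using sums_mult[OF exp_converges_real] by simp
  from sums_Suc[OF this] show ?thesis by simp
qed

definition exp_series :: "(nat \<Rightarrow> 'a) \<Rightarrow> 'a \<Rightarrow> 'a::{real_normed_field,banach}" where
  "exp_series c w = (\<Sum>k. w ^ k / fact k * c k)"

context
  fixes c :: "nat \<Rightarrow> 'a::{real_normed_field,banach}" and m :: real
  assumes coeff_le: "\<And>k. norm (c k) \<le> m ^ k"
begin

lemma norm_exp_series_term_le: "norm (w ^ k / fact k * c k) \<le> (m * norm w) ^ k / fact k"
proof -
  have "norm (w ^ k / fact k * c k) = norm w ^ k * norm (c k) / fact k"
    by (simp add: norm_mult norm_divide norm_power)
  also have "\<dots> \<le> norm w ^ k * m ^ k / fact k"
    by (intro divide_right_mono mult_left_mono coeff_le) auto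
  finally show ?thesis by (simp add: power_mult_distrib mult.commute)
qed

lemma summable_exp_series: "summable (\<lambda>k. w ^ k / fact k * c k)"
  by (rule summable_comparison_test[OF _ sums_summable[OF exp_converges_real]])
    (use norm_exp_series_term_le in auto)

lemma norm_exp_series_le: "norm (exp_series c w) \<le> exp (m * norm w)"
  unfolding exp_series_def
  using norm_suminf_le[OF norm_exp_series_term_le sums_summable[OF exp_converges_real]]
  by (simp add: sums_unique[OF exp_converges_real, symmetric])

lemma exp_series_lipschitz: "(m * exp (m * R))-lipschitz_on (cball 0 R) (exp_series c)"
proof (rule lipschitz_onI)
  show "0 \<le> m * exp (m * R)" using order_trans[OF norm_ge_zero coeff_le[of 1]] by simp
  fix a b :: 'a assume "a \<in> cball 0 R" "b \<in> cball 0 R"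
  then have ab: "norm a \<le> R" "norm b \<le> R" by auto
  then have "0 \<le> R" using norm_ge_zero order_trans by blast
  define d where "d k = norm (a - b) * (k * R ^ (k - 1) * m ^ k / fact k)" for k
  have d_sums: "d sums (norm (a - b) * (m * exp (m * R)))"
    unfolding d_def by (intro sums_mult exp_converges_deriv_real)
  have term_le: "norm (a ^ k / fact k * c k - b ^ k / fact k * c k) \<le> d k" for k
  proof -
    have "norm (a ^ k / fact k * c k - b ^ k / fact k * c k)
        = norm (a ^ k - b ^ k) * norm (c k) / fact k"
      by (simp add: norm_mult norm_divide flip: left_diff_distrib diff_divide_distrib)
    also have "\<dots> \<le> (k * R ^ (k - 1) * norm (a - b)) * m ^ k / fact k"
      using \<open>0 \<le> R\<close> by (intro divide_right_mono mult_mono norm_power_diff_le ab coeff_le) auto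
    finally show ?thesis by (simp add: d_def ac_simps)
  qed
  have "norm (\<Sum>k. a ^ k / fact k * c k - b ^ k / fact k * c k)
      \<le> norm (a - b) * (m * exp (m * R))"
    using norm_suminf_le[OF term_le sums_summable[OF d_sums]] by (simp add: sums_unique[OF d_sums])
  then show "dist (exp_series c a) (exp_series c b) \<le> m * exp (m * R) * dist a b"
    unfolding exp_series_def dist_norm suminf_diff[OF summable_exp_series summable_exp_series]
    by (simp add: ac_simps)
qed

end

lemma locally_finite_borel_sigma_finite:
  assumes "locally_finite_borel (\<nu> :: ('a::metric_space) measure)"
  shows "sigma_finite_measure \<nu>"
proof
  fix x0 :: 'a
  have sets: "sets \<nu> = sets borel" and space: "space \<nu> = UNIV"
    using assms sets_eq_imp_space_eq[of \<nu> borel] by (auto simp: locally_finite_borel_def)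
  have "(\<Union>n::nat. cball x0 n) = UNIV"
    by (auto intro: real_arch_simple)
  then show "\<exists>A. countable A \<and> A \<subseteq> sets \<nu> \<and> \<Union> A = space \<nu> \<and> (\<forall>a\<in>A. emeasure \<nu> a \<noteq> \<infinity>)"
    using assms unfolding locally_finite_borel_def
    by (intro exI[of _ "range (\<lambda>n::nat. cball x0 n)"]) (auto simp: sets space less_top)
qed

text \<open>No integrability assumption is needed, as a non-integrable function has Bochner
  integral 0.\<close>

lemma set_integral_abs_le_measure:
  fixes g :: "'b \<Rightarrow> real"
  assumes "A \<in> sets M" "emeasure M A < \<infinity>" and g: "\<And>x. x \<in> A \<Longrightarrow> \<bar>g x\<bar> \<le> 1"
  shows "\<bar>set_lebesgue_integral M A g\<bar> \<le> measure M A"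
proof (cases "set_integrable M A g")
  case True
  have "\<bar>set_lebesgue_integral M A g\<bar> \<le> (LINT x:A|M. \<bar>g x\<bar>)"
    using True set_integral_norm_bound by fastforce
  also have "\<dots> \<le> (LINT x:A|M. 1)"
  proof (rule set_integral_mono)
    show "set_integrable M A (\<lambda>_. 1::real)" using assms by (simp add: set_integrable_def)
  qed (use True g in \<open>auto simp: set_integrable_abs\<close>)
  also have "\<dots> = measure M A" using assms by (simp add: set_integral_const)
  finally show ?thesis .
next
  case False
  then show ?thesis by (simp add: set_lebesgue_integral_def set_integrable_def not_integrable_integral_eq)
qed

lemma hamiltonian_nonneg:
  assumes "repulsive \<phi>"
  shows "0 \<le> hamiltonian \<phi> xs"
  unfolding hamiltonian_def
proof (rule sum_nonneg)
  fix S assume "S \<in> Pow {..<length xs} - {{}}"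
  then obtain i where "i \<in> S" "i < length xs" by auto
  then have "nths xs S \<noteq> []" using set_nths[of xs S] by fastforce
  then show "0 \<le> \<phi> (nths xs S)" using assms by (simp add: repulsive_def)
qed

lemma abs_exp_neg_le_1: "0 \<le> h \<Longrightarrow> \<bar>exp_neg h\<bar> \<le> 1"
  by (cases h) (auto simp: exp_neg_def)

lemma repulsive_pin: "repulsive \<phi> \<Longrightarrow> repulsive (pin \<phi> xs)"
  by (auto simp: repulsive_def pin_def intro!: sum_nonneg)

definition partition_coeff :: "('a::metric_space) measure \<Rightarrow> 'a set \<Rightarrow> 'a potential \<Rightarrow> nat \<Rightarrow> real" where
  "partition_coeff \<nu> \<Lambda> \<phi> k = (LINT x : PiE {..<k} (\<lambda>_. \<Lambda>) | PiM {..<k} (\<lambda>_. \<nu>).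
     exp_neg (hamiltonian \<phi> (map x [0..<k])))"

lemma partition_fn_eq_exp_series:
  "partition_fn \<nu> \<Lambda> \<phi> = exp_series (\<lambda>k. complex_of_real (partition_coeff \<nu> \<Lambda> \<phi> k))"
  by (simp add: fun_eq_iff partition_fn_def exp_series_def partition_coeff_def)

lemma abs_partition_coeff_le:
  assumes \<nu>: "locally_finite_borel \<nu>" and \<Lambda>: "bounded \<Lambda>" "\<Lambda> \<in> sets borel" and "repulsive \<phi>"
  shows "\<bar>partition_coeff \<nu> \<Lambda> \<phi> k\<bar> \<le> measure \<nu> \<Lambda> ^ k"
proof -
  interpret sigma_finite_measure \<nu> by (rule locally_finite_borel_sigma_finite[OF \<nu>])
  interpret product_sigma_finite "\<lambda>_::nat. \<nu>" by unfold_locales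
  have \<Lambda>_sets: "\<Lambda> \<in> sets \<nu>" and \<Lambda>_fin: "emeasure \<nu> \<Lambda> < \<infinity>"
    using \<nu> \<Lambda> by (auto simp: locally_finite_borel_def)
  have box: "emeasure (PiM {..<k} (\<lambda>_. \<nu>)) (PiE {..<k} (\<lambda>_. \<Lambda>)) = ennreal (measure \<nu> \<Lambda> ^ k)"
    using emeasure_PiM[of "{..<k}" "\<lambda>_. \<Lambda>"] \<Lambda>_sets \<Lambda>_fin
    by (simp add: emeasure_eq_ennreal_measure ennreal_power)
  have "\<bar>partition_coeff \<nu> \<Lambda> \<phi> k\<bar> \<le> measure (PiM {..<k} (\<lambda>_. \<nu>)) (PiE {..<k} (\<lambda>_. \<Lambda>))"
    unfolding partition_coeff_def
    using \<Lambda>_sets \<Lambda>_fin box \<open>repulsive \<phi>\<close>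
    by (intro set_integral_abs_le_measure sets_PiM_I_finite abs_exp_neg_le_1 hamiltonian_nonneg)
      auto
  also have "\<dots> = measure \<nu> \<Lambda> ^ k"
    by (simp add: measure_def box)
  finally show ?thesis .
qed

lemma norm_partition_fn_le:
  assumes \<nu>: "locally_finite_borel \<nu>" and \<Lambda>: "bounded \<Lambda>" "\<Lambda> \<in> sets borel"
    and "repulsive \<phi>" and "norm w \<le> R"
  shows "norm (partition_fn \<nu> \<Lambda> \<phi> w) \<le> exp (measure \<nu> \<Lambda> * R)"
proof -
  have "norm (partition_fn \<nu> \<Lambda> \<phi> w) \<le> exp (measure \<nu> \<Lambda> * norm w)"
    unfolding partition_fn_eq_exp_series
    by (rule norm_exp_series_le) (simp add: abs_partition_coeff_le assms)
  also have "\<dots> \<le> exp (measure \<nu> \<Lambda> * R)"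
    using \<open>norm w \<le> R\<close> by (simp add: mult_left_mono)
  finally show ?thesis .
qed

lemma partition_fn_lipschitz:
  assumes "locally_finite_borel \<nu>" "bounded \<Lambda>" "\<Lambda> \<in> sets borel" "repulsive \<phi>"
  shows "(measure \<nu> \<Lambda> * exp (measure \<nu> \<Lambda> * R))-lipschitz_on (cball 0 R) (partition_fn \<nu> \<Lambda> \<phi>)"
  unfolding partition_fn_eq_exp_series
  by (rule exp_series_lipschitz) (simp add: abs_partition_coeff_le assms)

lemma kappa_lipschitz:
  fixes \<nu> :: "('a::metric_space) measure" and xs :: "'a list"
  assumes \<nu>: "locally_finite_borel \<nu>" and \<Lambda>: "bounded \<Lambda>" "\<Lambda> \<in> sets borel"
    and \<phi>: "repulsive \<phi>" and S: "S \<subseteq> cball 0 R" "0 \<le> R"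
    and \<eta>: "0 < \<eta>" "\<And>w. w \<in> S \<Longrightarrow> \<eta> \<le> norm (partition_fn \<nu> \<Lambda> \<phi> w)"
    and n: "length xs = n"
  defines "M \<equiv> exp (measure \<nu> \<Lambda> * R)" and "L \<equiv> measure \<nu> \<Lambda> * exp (measure \<nu> \<Lambda> * R)"
  shows "(R ^ n * M * (L / \<eta>\<^sup>2) + 1 / \<eta> * (R ^ n * L + M * (n * R ^ (n - 1))))-lipschitz_on S
           (\<lambda>w. kappa \<nu> \<Lambda> \<phi> w xs)"
proof -
  have Z_lip: "L-lipschitz_on S (partition_fn \<nu> \<Lambda> \<psi>)" if "repulsive \<psi>" for \<psi>
    unfolding L_def by (rule lipschitz_on_subset[OF partition_fn_lipschitz[OF \<nu> \<Lambda> that] S(1)])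
  have Z_le: "norm (partition_fn \<nu> \<Lambda> \<psi> w) \<le> M" if "repulsive \<psi>" "w \<in> S" for \<psi> w
    unfolding M_def using S that by (intro norm_partition_fn_le \<nu> \<Lambda>) auto
  have power_le: "norm (w ^ n) \<le> R ^ n" if "w \<in> S" for w
    using S that by (auto simp: norm_power intro!: power_mono)
  have numerator: "(R ^ n * L + M * (n * R ^ (n - 1)))-lipschitz_on S
      (\<lambda>w. w ^ n * partition_fn \<nu> \<Lambda> (pin \<phi> xs) w)"
    using S \<phi> power_le
    by (intro lipschitz_on_mult lipschitz_on_subset[OF lipschitz_on_power] Z_lip Z_le repulsive_pin)
      (auto simp: M_def)
  have inverse_denominator: "(L / \<eta>\<^sup>2)-lipschitz_on S (\<lambda>w. inverse (partition_fn \<nu> \<Lambda> \<phi> w))"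
    using \<eta> \<phi> by (intro lipschitz_on_inverse Z_lip)
  have "(R ^ n * M * (L / \<eta>\<^sup>2) + 1 / \<eta> * (R ^ n * L + M * (n * R ^ (n - 1))))-lipschitz_on S
      (\<lambda>w. (w ^ n * partition_fn \<nu> \<Lambda> (pin \<phi> xs) w) * inverse (partition_fn \<nu> \<Lambda> \<phi> w))"
  proof (rule lipschitz_on_mult[OF numerator inverse_denominator])
    fix w assume "w \<in> S"
    then show "norm (w ^ n * partition_fn \<nu> \<Lambda> (pin \<phi> xs) w) \<le> R ^ n * M"
      using S \<phi> power_le by (auto simp: norm_mult intro!: mult_mono Z_le repulsive_pin)
    show "norm (inverse (partition_fn \<nu> \<Lambda> \<phi> w)) \<le> 1 / \<eta>"
      using \<eta> \<open>w \<in> S\<close> by (simp add: norm_inverse le_imp_inverse_le divide_inverse)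
  qed (use S \<eta> in \<open>auto simp: M_def\<close>)
  then show ?thesis by (simp add: kappa_def divide_inverse n)
qed

lemma partition_fn_bounded_below_near:
  assumes \<nu>: "locally_finite_borel \<nu>" and \<Lambda>: "bounded \<Lambda>" "\<Lambda> \<in> sets borel"
    and rep: "\<And>\<phi>. \<phi> \<in> \<Phi> \<Longrightarrow> repulsive \<phi>" and "0 < \<delta>" and "zero_free \<nu> \<Phi> \<Lambda> w0 \<delta>"
  obtains r where "0 < r" "ball w0 r \<subseteq> cball 0 (norm w0 + 1)"
    "\<And>\<phi> w. \<phi> \<in> \<Phi> \<Longrightarrow> w \<in> ball w0 r \<Longrightarrow> \<delta> / 2 \<le> norm (partition_fn \<nu> \<Lambda> \<phi> w)"
proof
  define R where "R = norm w0 + 1"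
  define L where "L = measure \<nu> \<Lambda> * exp (measure \<nu> \<Lambda> * R)"
  define r where "r = min 1 (\<delta> / (2 * (L + 1)))"
  have "0 \<le> L" by (simp add: L_def)
  then show "0 < r" using \<open>0 < \<delta>\<close> by (simp add: r_def)
  show ball_sub: "ball w0 r \<subseteq> cball 0 R"
  proof
    fix w assume "w \<in> ball w0 r"
    then have "norm (w - w0) < 1" by (simp add: r_def dist_norm norm_minus_commute)
    then show "w \<in> cball 0 R" using norm_triangle_ineq2[of w w0] by (simp add: R_def)
  qed
  fix \<phi> w assume \<phi>: "\<phi> \<in> \<Phi>" and w: "w \<in> ball w0 r"
  have "w \<in> cball 0 R" "w0 \<in> cball 0 R" using w ball_sub by (auto simp: R_def)
  then have "dist (partition_fn \<nu> \<Lambda> \<phi> w) (partition_fn \<nu> \<Lambda> \<phi> w0) \<le> L * dist w w0"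
    unfolding L_def by (rule lipschitz_onD[OF partition_fn_lipschitz[OF \<nu> \<Lambda> rep[OF \<phi>]]])
  also have "\<dots> \<le> (L + 1) * (\<delta> / (2 * (L + 1)))"
    using w \<open>0 \<le> L\<close> by (intro mult_mono) (auto simp: r_def dist_commute)
  also have "\<dots> = \<delta> / 2"
    using \<open>0 \<le> L\<close> by (simp add: field_simps)
  finally have "dist (partition_fn \<nu> \<Lambda> \<phi> w) (partition_fn \<nu> \<Lambda> \<phi> w0) \<le> \<delta> / 2" .
  moreover have "\<delta> \<le> norm (partition_fn \<nu> \<Lambda> \<phi> w0)"
    using \<open>zero_free \<nu> \<Phi> \<Lambda> w0 \<delta>\<close> \<phi> by (simp add: zero_free_def)
  ultimately show "\<delta> / 2 \<le> norm (partition_fn \<nu> \<Lambda> \<phi> w)"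
    using norm_triangle_ineq3[of "partition_fn \<nu> \<Lambda> \<phi> w" "partition_fn \<nu> \<Lambda> \<phi> w0"]
    unfolding dist_norm by linarith
qed

lemma unif_equicontinuous_partition_fn:
  assumes \<nu>: "locally_finite_borel \<nu>" and \<Lambda>: "bounded \<Lambda>" "\<Lambda> \<in> sets borel"
    and rep: "\<And>\<phi>. \<phi> \<in> \<Phi> \<Longrightarrow> repulsive \<phi>" and "bounded U"
  shows "unif_equicontinuous_on U (partition_fn \<nu> \<Lambda> ` \<Phi>)"
proof -
  obtain R where "U \<subseteq> cball 0 R" using \<open>bounded U\<close> by (auto simp: bounded_iff subset_iff)
  then show ?thesis
    using lipschitz_on_subset[OF partition_fn_lipschitz[OF \<nu> \<Lambda> rep]]
    by (intro unif_equicontinuous_on_lipschitz) blast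
qed

lemma kappa_unif_equicontinuous_near:
  assumes \<nu>: "locally_finite_borel \<nu>" and \<Lambda>: "bounded \<Lambda>" "\<Lambda> \<in> sets borel"
    and rep: "\<And>\<phi>. \<phi> \<in> \<Phi> \<Longrightarrow> repulsive \<phi>" and \<delta>: "0 < \<delta>" "zero_free \<nu> \<Phi> \<Lambda> w0 \<delta>"
  shows "\<exists>W. open W \<and> w0 \<in> W \<and> (\<forall>\<phi>\<in>\<Phi>. \<forall>w\<in>W. partition_fn \<nu> \<Lambda> \<phi> w \<noteq> 0) \<and>
    unif_equicontinuous_on W {(\<lambda>w. kappa \<nu> \<Lambda> \<phi> w [x]) | \<phi> x. \<phi> \<in> \<Phi> \<and> x \<in> \<Lambda>}"
proof -
  obtain r where r: "0 < r" "ball w0 r \<subseteq> cball 0 (norm w0 + 1)"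
    and Z_ge: "\<And>\<phi> w. \<phi> \<in> \<Phi> \<Longrightarrow> w \<in> ball w0 r \<Longrightarrow> \<delta> / 2 \<le> norm (partition_fn \<nu> \<Lambda> \<phi> w)"
    using partition_fn_bounded_below_near[OF \<nu> \<Lambda> rep \<delta>] by blast
  have "\<exists>C. \<forall>\<phi>\<in>\<Phi>. \<forall>x. C-lipschitz_on (ball w0 r) (\<lambda>w. kappa \<nu> \<Lambda> \<phi> w [x])"
    by (intro exI ballI allI)
      (rule kappa_lipschitz[OF \<nu> \<Lambda> rep, where n = 1 and R = "norm w0 + 1" and \<eta> = "\<delta> / 2"];
        use \<delta>(1) r(2) Z_ge in auto)
  then have "unif_equicontinuous_on (ball w0 r) {(\<lambda>w. kappa \<nu> \<Lambda> \<phi> w [x]) | \<phi> x. \<phi> \<in> \<Phi> \<and> x \<in> \<Lambda>}"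
    by (elim exE, intro unif_equicontinuous_on_lipschitz) auto
  moreover have "partition_fn \<nu> \<Lambda> \<phi> w \<noteq> 0" if "\<phi> \<in> \<Phi>" "w \<in> ball w0 r" for \<phi> w
    using Z_ge[OF that] \<open>0 < \<delta>\<close> by auto
  ultimately show ?thesis using \<open>0 < r\<close> by (intro exI[of _ "ball w0 r"]) auto
qed

theorem mainTheorem3:
  fixes \<nu> :: "('a::polish_space) measure"
    and \<Phi> :: "'a potential set" and U :: "complex set" and \<Lambda> :: "'a set" and z :: 'a
  assumes \<nu>: "locally_finite_borel \<nu>"
    and \<Phi>: "\<forall>\<phi>\<in>\<Phi>. is_potential \<phi> \<and> repulsive \<phi>"
    and U: "bounded U"
    and \<Lambda>: "bounded \<Lambda>" "\<Lambda> \<in> sets borel"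
  shows "unif_equicontinuous_on U ((\<lambda>\<phi> w. partition_fn \<nu> \<Lambda> \<phi> w) ` \<Phi>)
    \<and> (\<forall>w0 \<delta>. closed_under_modification z \<Phi> \<and> \<delta> > 0 \<and> zero_free \<nu> \<Phi> \<Lambda> w0 \<delta> \<longrightarrow>
         (\<exists>W. open W \<and> w0 \<in> W \<and>
            (\<forall>\<phi>\<in>\<Phi>. \<forall>w\<in>W. partition_fn \<nu> \<Lambda> \<phi> w \<noteq> 0) \<and>
            unif_equicontinuous_on W
              {(\<lambda>w. kappa \<nu> \<Lambda> \<phi> w [x]) | \<phi> x. \<phi> \<in> \<Phi> \<and> x \<in> \<Lambda>}))"
proof -
  have rep: "\<And>\<phi>. \<phi> \<in> \<Phi> \<Longrightarrow> repulsive \<phi>" using \<Phi> by blast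
  show ?thesis
    using unif_equicontinuous_partition_fn[OF \<nu> \<Lambda> rep U] kappa_unif_equicontinuous_near[OF \<nu> \<Lambda> rep]
    by blast
qed

end
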